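(* In the standing setting, suppose $0<\alpha_k\le\frac1{2M\tilde L}$ for all $k\ge0$. Fix $\ell\in\{1,\dots,N\}$ and $n\ge0$, and define the numbers $A_k,B_k,C_k$ ($0\le k\le n$) as in the context. Then for every $k\in\{0,\dots,n\}$, almost surely $$\mathbb{E}[\langle x_{n+1}-x_*,v_\ell\rangle^2\mid x_k]\le A_k\langle x_k-x_*,v_\ell\rangle^2+B_k\|x_k-x_*\|^2+C_k.$$ In particular (case $k=0$), $\mathbb{E}[\langle x_{n+1}-x_*,v_\ell\rangle^2]\le A_0\langle x_0-x_*,v_\ell\rangle^2+B_0\|x_0-x_*\|^2+C_0$.
   Context: Standing setting: $M\ge N$, $A\in\mathbb{R}^{M\times N}$ of full column rank with rows $a_1,\dots,a_M$, $b\in\mathbb{R}^M$, $F(x)=\tfrac12\|Ax-b\|^2$, $x_*$ the unique minimizer, $F_*=F(x_* )$. Singular values $\sigma_1\ge\dots\ge\sigma_N>0$ with orthonormal right singular vectors $v_1,\dots,v_N$; $\sigma_{\max}=\sigma_1$, $\sigma_{\min}=\sigma_N$, $c(A)=\sigma_{\max}^2/\sigma_{\min}^2$, $\tilde L=\max_i\|a_i\|^2$. $f_i(x)=\frac M2(\langle a_i,x\rangle-b_i)^2$; $\sigma^2=\frac1M\sum_i\|\nabla f_i(x_* )\|^2$. SGD: deterministic $x_0$, deterministic step sizes $\alpha_k>0$, $i_k$ i.i.d. uniform on $\{1,\dots,M\}$, $x_{k+1}=x_k-\alpha_k\nabla f_{i_k}(x_k)$. For $\alpha>0$ put $A(\alpha)=1-2\alpha\sigma_\ell^2$,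 $B(\alpha)=\alpha^2M\tilde Lc(A)\sigma_{\max}^2$, $C(\alpha)=2\alpha^2M\tilde LF_*$, $p(\alpha)=1-\alpha\sigma_{\min}^2$, $q(\alpha)=2\alpha^2\sigma^2$. For fixed $n$ and $0\le k\le n$: $A_k=\prod_{i=k}^nA(\alpha_i)$; $B_k=\sum_{j=k}^n\Big(\prod_{i=j+1}^nA(\alpha_i)\Big)B(\alpha_j)\Big(\prod_{i=k}^{j-1}p(\alpha_i)\Big)$; $C_k=\sum_{i=k+1}^n\big(q(\alpha_{i-1})B_i+A_iC(\alpha_{i-1})\big)+C(\alpha_n)$ (empty products equal $1$, empty sums $0$). *)

theory Defs
  imports "HOL-Analysis.Analysis" "HOL-Probability.Probability"
begin

text \<open>Rows of A are A $ i, i :: 'm; M = CARD('m), N = CARD('n).\<close>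

definition lsF :: "real^'n^'m \<Rightarrow> real^'m \<Rightarrow> real^'n \<Rightarrow> real" where
  "lsF A b x = (1/2) * (norm (A *v x - b))^2"

text \<open>Gradient of f_i(x) = M/2 (<a_i,x> - b_i)^2.\<close>
definition grad_f :: "real^'n^'m \<Rightarrow> real^'m \<Rightarrow> 'm \<Rightarrow> real^'n \<Rightarrow> real^'n" where
  "grad_f A b i x = (real CARD('m) * ((A $ i) \<bullet> x - b $ i)) *\<^sub>R (A $ i)"

definition Ltil :: "real^'n^'m \<Rightarrow> real" where
  "Ltil A = Max (range (\<lambda>i. (norm (A $ i))^2))"

definition noise_var :: "real^'n^'m \<Rightarrow> real^'m \<Rightarrow> real^'n \<Rightarrow> real" where
  "noise_var A b xs = (1 / real CARD('m)) * (\<Sum>i\<in>UNIV. (norm (grad_f A b i xs))^2)"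

text \<open>SGD iterates as functions of the index sequence \<omega> (\<omega> k = i_k).\<close>
primrec sgd :: "real^'n^'m \<Rightarrow> real^'m \<Rightarrow> real^'n \<Rightarrow> (nat \<Rightarrow> real) \<Rightarrow> nat \<Rightarrow> (nat \<Rightarrow> 'm) \<Rightarrow> real^'n" where
  "sgd A b x0 \<alpha> 0 \<omega> = x0"
| "sgd A b x0 \<alpha> (Suc k) \<omega> = sgd A b x0 \<alpha> k \<omega> - \<alpha> k *\<^sub>R grad_f A b (\<omega> k) (sgd A b x0 \<alpha> k \<omega>)"

definition idx_space :: "(nat \<Rightarrow> 'm::finite) measure" where
  "idx_space = PiM UNIV (\<lambda>_. measure_pmf (pmf_of_set (UNIV :: 'm set)))"

text \<open>The scalar functions A(\<alpha>),...,q(\<alpha>); parameters: sl = \<sigma>_l, smax, smin, M = m,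
  Lt = \<tilde>L, Fs = F_*, s2 = \<sigma>^2.\<close>
definition Afun :: "real \<Rightarrow> real \<Rightarrow> real" where "Afun sl a = 1 - 2 * a * sl^2"
definition Bfun :: "real \<Rightarrow> real \<Rightarrow> real \<Rightarrow> real \<Rightarrow> real \<Rightarrow> real" where
  "Bfun m Lt smax smin a = a^2 * m * Lt * (smax^2 / smin^2) * smax^2"
definition Cfun :: "real \<Rightarrow> real \<Rightarrow> real \<Rightarrow> real \<Rightarrow> real" where
  "Cfun m Lt Fs a = 2 * a^2 * m * Lt * Fs"
definition pfun :: "real \<Rightarrow> real \<Rightarrow> real" where "pfun smin a = 1 - a * smin^2"
definition qfun :: "real \<Rightarrow> real \<Rightarrow> real" where "qfun s2 a = 2 * a^2 * s2"

definition Acoef :: "real \<Rightarrow> (nat \<Rightarrow> real) \<Rightarrow> nat \<Rightarrow> nat \<Rightarrow> real" where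
  "Acoef sl \<alpha> n k = (\<Prod>i=k..n. Afun sl (\<alpha> i))"

definition Bcoef :: "real \<Rightarrow> real \<Rightarrow> real \<Rightarrow> real \<Rightarrow> real \<Rightarrow> (nat \<Rightarrow> real) \<Rightarrow> nat \<Rightarrow> nat \<Rightarrow> real" where
  "Bcoef sl m Lt smax smin \<alpha> n k =
     (\<Sum>j=k..n. (\<Prod>i=j+1..n. Afun sl (\<alpha> i)) * Bfun m Lt smax smin (\<alpha> j)
                 * (\<Prod>i=k..<j. pfun smin (\<alpha> i)))"

definition Ccoef :: "real \<Rightarrow> real \<Rightarrow> real \<Rightarrow> real \<Rightarrow> real \<Rightarrow> real \<Rightarrow> real \<Rightarrow> (nat \<Rightarrow> real) \<Rightarrow> nat \<Rightarrow> nat \<Rightarrow> real" where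
  "Ccoef sl m Lt smax smin Fs s2 \<alpha> n k =
     (\<Sum>i=k+1..n. qfun s2 (\<alpha> (i-1)) * Bcoef sl m Lt smax smin \<alpha> n i
                 + Acoef sl \<alpha> n i * Cfun m Lt Fs (\<alpha> (i-1))) + Cfun m Lt Fs (\<alpha> n)"

end

theory Submission
  imports Defs
begin

text \<open>Write \<open>e = x - x\<^sub>*\<close>. By the normal equations \<open>A\<^sup>T(A x\<^sub>* - b) = 0\<close> the residual of row
  \<open>i\<close> at \<open>x\<close> is \<open>\<langle>a\<^sub>i, e\<rangle> + r\<^sub>i\<close> with \<open>r = A x\<^sub>* - b\<close> orthogonal to the range of \<open>A\<close>. Averaging one
  SGD step over the uniformly chosen row and expanding in the right singular vectors gives
  \<open>\<bbbE> \<langle>e\<^sub>k\<^sub>+\<^sub>1, v\<^sub>l\<rangle>\<^sup>2 \<le> A(\<alpha>\<^sub>k) \<langle>e\<^sub>k, v\<^sub>l\<rangle>\<^sup>2 + B(\<alpha>\<^sub>k) \<parallel>e\<^sub>k\<parallel>\<^sup>2 + C(\<alpha>\<^sub>k)\<close> and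
  \<open>\<bbbE> \<parallel>e\<^sub>k\<^sub>+\<^sub>1\<parallel>\<^sup>2 \<le> p(\<alpha>\<^sub>k) \<parallel>e\<^sub>k\<parallel>\<^sup>2 + q(\<alpha>\<^sub>k)\<close>, the step size bound keeping all coefficients
  nonnegative. Since \<open>x\<^sub>k\<close> depends only on \<open>i\<^sub>0, \<dots>, i\<^sub>k\<^sub>-\<^sub>1\<close>, the conditional expectation of
  \<open>\<langle>e\<^sub>n\<^sub>+\<^sub>1, v\<^sub>l\<rangle>\<^sup>2\<close> given \<open>x\<^sub>k\<close> is the \<open>(n + 1 - k)\<close>-fold average of the step maps evaluated at
  \<open>x\<^sub>k\<close>. Applying the two one-step bounds to this average backwards from \<open>n\<close> produces exactly the
  recursions \<open>A\<^sub>k = A(\<alpha>\<^sub>k) A\<^sub>k\<^sub>+\<^sub>1\<close>, \<open>B\<^sub>k = A\<^sub>k\<^sub>+\<^sub>1 B(\<alpha>\<^sub>k) + p(\<alpha>\<^sub>k) B\<^sub>k\<^sub>+\<^sub>1\<close> and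
  \<open>C\<^sub>k = q(\<alpha>\<^sub>k) B\<^sub>k\<^sub>+\<^sub>1 + A\<^sub>k\<^sub>+\<^sub>1 C(\<alpha>\<^sub>k) + C\<^sub>k\<^sub>+\<^sub>1\<close>.\<close>

lemma quadratic_nonneg_linear_coeff_zero:
  fixes u c :: real
  assumes "\<And>t. 0 \<le> t * u + t\<^sup>2 * c"
  shows "u = 0"
proof -
  define k where "k = \<bar>c\<bar> + 1"
  have k: "k > 0" "\<bar>c\<bar> \<le> k" by (auto simp: k_def)
  have "0 \<le> (- u / (2 * k)) * u + (- u / (2 * k))\<^sup>2 * c" by (rule assms)
  also have "\<dots> \<le> - u\<^sup>2 / (2 * k) + u\<^sup>2 / (4 * k)"
  proof -
    have "(- u / (2 * k))\<^sup>2 * c \<le> (- u / (2 * k))\<^sup>2 * k"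
      using k by (intro mult_left_mono) auto
    thus ?thesis using k by (simp add: power2_eq_square field_simps)
  qed
  finally have "u\<^sup>2 \<le> 0" using k by (simp add: field_simps)
  thus ?thesis by simp
qed

lemma inner_matrix_vector_mult_transpose:
  "(A *v y) \<bullet> w = y \<bullet> (transpose A *v w)" for A :: "real^'n^'m"
  by (metis dot_lmul_matrix inner_commute transpose_matrix_vector)

lemma inner_matrix_vector_mult_rows:
  "(A *v y) \<bullet> (A *v z) = (\<Sum>c\<in>UNIV. (A $ c \<bullet> y) * (A $ c \<bullet> z))" for A :: "real^'n^'m"
  by (simp add: inner_vec_def matrix_vector_mul_component)

lemma orthonormal_expansion:
  fixes v :: "'i \<Rightarrow> 'a::euclidean_space"
  assumes orth: "\<forall>i\<in>I. \<forall>j\<in>I. v i \<bullet> v j = (if i = j then 1 else 0)"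
    and I: "finite I" "card I = DIM('a)"
  shows "(\<Sum>j\<in>I. (y \<bullet> v j) *\<^sub>R v j) = y"
proof -
  have inj: "inj_on v I"
    by (rule inj_onI) (metis orth one_neq_zero)
  have orthogonal: "pairwise orthogonal (v ` I)"
    using orth by (auto simp: pairwise_def orthogonal_def)
  have "0 \<notin> v ` I"
    using orth by force
  with orthogonal have "independent (v ` I)"
    by (rule pairwise_orthogonal_independent)
  moreover have "card (v ` I) = DIM('a)"
    using inj I by (simp add: card_image)
  ultimately have "y \<in> span (v ` I)"
    using card_ge_dim_independent[of "v ` I" UNIV] by auto
  hence "(\<Sum>u\<in>v ` I. (y \<bullet> u) *\<^sub>R u) = y"
    using orthogonal orth I by (intro orthonormal_basis_expand) (auto simp: norm_eq_1)
  thus ?thesis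
    by (simp add: sum.reindex[OF inj])
qed

lemma orthonormal_parseval:
  fixes v :: "'i \<Rightarrow> 'a::euclidean_space"
  assumes "\<forall>i\<in>I. \<forall>j\<in>I. v i \<bullet> v j = (if i = j then 1 else 0)" "finite I" "card I = DIM('a)"
  shows "y \<bullet> y = (\<Sum>j\<in>I. (y \<bullet> v j)\<^sup>2)"
proof -
  have "y \<bullet> y = y \<bullet> (\<Sum>j\<in>I. (y \<bullet> v j) *\<^sub>R v j)"
    using orthonormal_expansion[OF assms] by simp
  thus ?thesis
    by (simp add: inner_sum_right power2_eq_square)
qed

lemma row_norm_sq_le_Ltil: "(norm (A $ c))\<^sup>2 \<le> Ltil A"
  unfolding Ltil_def by (rule Max_ge) auto

lemma row_inner_sq_le_Ltil:
  assumes "norm u = 1"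
  shows "(A $ c \<bullet> u)\<^sup>2 \<le> Ltil A"
proof -
  have "(A $ c \<bullet> u)\<^sup>2 \<le> (norm (A $ c) * norm u)\<^sup>2"
    by (metis Cauchy_Schwarz_ineq2 abs_ge_zero power2_abs power_mono)
  also have "\<dots> \<le> Ltil A"
    using assms row_norm_sq_le_Ltil by simp
  finally show ?thesis .
qed

lemma Acoef_Suc:
  "k \<le> n \<Longrightarrow> Acoef sl \<alpha> n k = Afun sl (\<alpha> k) * Acoef sl \<alpha> n (Suc k)"
  by (simp add: Acoef_def prod.atLeast_Suc_atMost)

lemma Bcoef_Suc:
  assumes "k \<le> n"
  shows "Bcoef sl m Lt s1 s2 \<alpha> n k
    = Acoef sl \<alpha> n (Suc k) * Bfun m Lt s1 s2 (\<alpha> k) + pfun s2 (\<alpha> k) * Bcoef sl m Lt s1 s2 \<alpha> n (Suc k)"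
proof -
  let ?P = "\<lambda>j. \<Prod>i=j+1..n. Afun sl (\<alpha> i)"
  have "Bcoef sl m Lt s1 s2 \<alpha> n k = ?P k * Bfun m Lt s1 s2 (\<alpha> k)
      + (\<Sum>j=Suc k..n. ?P j * Bfun m Lt s1 s2 (\<alpha> j) * (\<Prod>i=k..<j. pfun s2 (\<alpha> i)))"
    unfolding Bcoef_def using assms by (simp add: sum.atLeast_Suc_atMost)
  also have "(\<Sum>j=Suc k..n. ?P j * Bfun m Lt s1 s2 (\<alpha> j) * (\<Prod>i=k..<j. pfun s2 (\<alpha> i)))
      = (\<Sum>j=Suc k..n. pfun s2 (\<alpha> k) * (?P j * Bfun m Lt s1 s2 (\<alpha> j) * (\<Prod>i=Suc k..<j. pfun s2 (\<alpha> i))))"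
    by (intro sum.cong refl) (simp add: prod.atLeast_Suc_lessThan)
  finally show ?thesis
    by (simp add: Acoef_def Bcoef_def sum_distrib_left)
qed

lemma Ccoef_Suc:
  "k < n \<Longrightarrow> Ccoef sl m Lt s1 s2 Fs q \<alpha> n k
    = qfun q (\<alpha> k) * Bcoef sl m Lt s1 s2 \<alpha> n (Suc k) + Acoef sl \<alpha> n (Suc k) * Cfun m Lt Fs (\<alpha> k)
      + Ccoef sl m Lt s1 s2 Fs q \<alpha> n (Suc k)"
  unfolding Ccoef_def by (simp add: sum.atLeast_Suc_atMost)

text \<open>\<open>mean_after \<phi> T t d x\<close> is \<open>\<bbbE>[\<phi>(X\<^sub>t\<^sub>+\<^sub>d) | X\<^sub>t = x]\<close> for the chain
  \<open>X\<^sub>s\<^sub>+\<^sub>1 = T s i\<^sub>s X\<^sub>s\<close> driven by independent uniform indices \<open>i\<^sub>s\<close>.\<close>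

primrec mean_after :: "('a \<Rightarrow> real) \<Rightarrow> (nat \<Rightarrow> 'm::finite \<Rightarrow> 'a \<Rightarrow> 'a) \<Rightarrow> nat \<Rightarrow> nat \<Rightarrow> 'a \<Rightarrow> real" where
  "mean_after \<phi> T t 0 x = \<phi> x"
| "mean_after \<phi> T t (Suc d) x = (\<Sum>c\<in>UNIV. mean_after \<phi> T (Suc t) d (T t c x)) / real CARD('m)"

definition sgd_step :: "real^'n^'m \<Rightarrow> real^'m \<Rightarrow> (nat \<Rightarrow> real) \<Rightarrow> nat \<Rightarrow> 'm \<Rightarrow> real^'n \<Rightarrow> real^'n" where
  "sgd_step A b \<alpha> t c x = x - \<alpha> t *\<^sub>R grad_f A b c x"

lemma sgd_Suc_step: "sgd A b x0 \<alpha> (Suc k) \<omega> = sgd_step A b \<alpha> k (\<omega> k) (sgd A b x0 \<alpha> k \<omega>)"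
  by (simp add: sgd_step_def)

locale lsq_svd =
  fixes A :: "real^'n^'m" and b :: "real^'m" and xs :: "real^'n"
    and \<sigma> :: "nat \<Rightarrow> real" and v :: "nat \<Rightarrow> real^'n"
  assumes xs_min: "\<forall>y. lsF A b xs \<le> lsF A b y"
    and orth: "\<forall>i\<in>{1..CARD('n)}. \<forall>j\<in>{1..CARD('n)}. v i \<bullet> v j = (if i = j then 1 else 0)"
    and sv: "\<forall>j\<in>{1..CARD('n)}. transpose A *v (A *v v j) = (\<sigma> j)\<^sup>2 *\<^sub>R v j"
    and sv_pos: "\<forall>j\<in>{1..CARD('n)}. \<sigma> j > 0"
    and sv_ord: "\<forall>i\<in>{1..CARD('n)}. \<forall>j\<in>{1..CARD('n)}. i \<le> j \<longrightarrow> \<sigma> j \<le> \<sigma> i"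
begin

definition residual :: "real^'m" where
  "residual = A *v xs - b"

lemma normal_equation: "(A *v z) \<bullet> residual = 0"
proof (rule quadratic_nonneg_linear_coeff_zero)
  fix t :: real
  have "A *v (xs + t *\<^sub>R z) - b = residual + t *\<^sub>R (A *v z)"
    by (simp add: residual_def matrix_vector_right_distrib matrix_vector_mult_scaleR algebra_simps)
  hence expand: "lsF A b (xs + t *\<^sub>R z)
      = lsF A b xs + t * ((A *v z) \<bullet> residual) + t\<^sup>2 * ((A *v z) \<bullet> (A *v z) / 2)"
    unfolding lsF_def power2_norm_eq_inner residual_def[symmetric]
    by (simp add: inner_add_left inner_add_right inner_commute algebra_simps power2_eq_square)
  thus "0 \<le> t * ((A *v z) \<bullet> residual) + t\<^sup>2 * ((A *v z) \<bullet> (A *v z) / 2)"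
    using xs_min[rule_format, of "xs + t *\<^sub>R z"] expand by linarith
qed

lemma lsF_at_minimizer: "lsF A b xs = residual \<bullet> residual / 2"
  by (simp add: lsF_def residual_def power2_norm_eq_inner)

lemma row_residual: "A $ c \<bullet> x - b $ c = A $ c \<bullet> (x - xs) + residual $ c"
  by (simp add: residual_def matrix_vector_mul_component inner_diff_right)

lemma sum_row_residual_mult:
  "(\<Sum>c\<in>UNIV. (A $ c \<bullet> x - b $ c) * (A $ c \<bullet> y)) = (A *v (x - xs)) \<bullet> (A *v y)"
proof -
  have "(\<Sum>c\<in>UNIV. (A $ c \<bullet> x - b $ c) * (A $ c \<bullet> y))
      = (\<Sum>c\<in>UNIV. (A *v (x - xs) + residual) $ c * (A *v y) $ c)"
    by (simp add: row_residual matrix_vector_mul_component)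
  also have "\<dots> = (A *v (x - xs) + residual) \<bullet> (A *v y)"
    by (simp only: inner_vec_def inner_real_def)
  also have "\<dots> = (A *v (x - xs)) \<bullet> (A *v y)"
    using normal_equation[of y] by (simp add: inner_add_left inner_commute[of residual])
  finally show ?thesis .
qed

lemma sum_row_residual_sq:
  "(\<Sum>c\<in>UNIV. (A $ c \<bullet> x - b $ c)\<^sup>2) = (A *v (x - xs)) \<bullet> (A *v (x - xs)) + 2 * lsF A b xs"
proof -
  have "(\<Sum>c\<in>UNIV. (A $ c \<bullet> x - b $ c)\<^sup>2)
      = (\<Sum>c\<in>UNIV. (A *v (x - xs) + residual) $ c * (A *v (x - xs) + residual) $ c)"
    by (simp add: row_residual matrix_vector_mul_component power2_eq_square)
  also have "\<dots> = (A *v (x - xs) + residual) \<bullet> (A *v (x - xs) + residual)"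
    by (simp only: inner_vec_def inner_real_def)
  finally show ?thesis
    using normal_equation[of "x - xs"]
    by (simp add: lsF_at_minimizer inner_add_left inner_add_right inner_commute[of residual "A *v (x - xs)"])
qed

lemma svd_expansion: "(\<Sum>j\<in>{1..CARD('n)}. (y \<bullet> v j) *\<^sub>R v j) = y"
  using orth by (intro orthonormal_expansion) auto

lemma svd_parseval: "y \<bullet> y = (\<Sum>j\<in>{1..CARD('n)}. (y \<bullet> v j)\<^sup>2)"
  using orth by (intro orthonormal_parseval) auto

lemma gram_expansion:
  "transpose A *v (A *v y) = (\<Sum>j\<in>{1..CARD('n)}. ((y \<bullet> v j) * (\<sigma> j)\<^sup>2) *\<^sub>R v j)"
proof -
  have "transpose A *v (A *v y) = transpose A *v (A *v (\<Sum>j\<in>{1..CARD('n)}. (y \<bullet> v j) *\<^sub>R v j))"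
    by (simp only: svd_expansion)
  also have "\<dots> = (\<Sum>j\<in>{1..CARD('n)}. (y \<bullet> v j) *\<^sub>R (transpose A *v (A *v v j)))"
    by (simp add: linear_sum[OF matrix_vector_mul_linear] o_def matrix_vector_mult_scaleR
        del: transpose_matrix_vector)
  also have "\<dots> = (\<Sum>j\<in>{1..CARD('n)}. ((y \<bullet> v j) * (\<sigma> j)\<^sup>2) *\<^sub>R v j)"
    using sv by (intro sum.cong) auto
  finally show ?thesis .
qed

lemma norm_A_sq_expansion:
  "(A *v y) \<bullet> (A *v y) = (\<Sum>j\<in>{1..CARD('n)}. (\<sigma> j)\<^sup>2 * (y \<bullet> v j)\<^sup>2)"
  unfolding inner_matrix_vector_mult_transpose gram_expansion
  by (simp add: inner_sum_right power2_eq_square mult_ac)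

lemma sigma_sq_bounds:
  assumes "j \<in> {1..CARD('n)}"
  shows "(\<sigma> CARD('n))\<^sup>2 \<le> (\<sigma> j)\<^sup>2" "(\<sigma> j)\<^sup>2 \<le> (\<sigma> 1)\<^sup>2"
proof -
  have "\<sigma> CARD('n) \<le> \<sigma> j" "\<sigma> j \<le> \<sigma> 1" "0 < \<sigma> CARD('n)" "0 < \<sigma> j"
    using sv_ord sv_pos assms by auto
  thus "(\<sigma> CARD('n))\<^sup>2 \<le> (\<sigma> j)\<^sup>2" "(\<sigma> j)\<^sup>2 \<le> (\<sigma> 1)\<^sup>2"
    by (auto intro: power_mono)
qed

lemma norm_A_sq_le: "(A *v y) \<bullet> (A *v y) \<le> (\<sigma> 1)\<^sup>2 * (y \<bullet> y)"
  unfolding norm_A_sq_expansion svd_parseval[of y] sum_distrib_left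
  by (rule sum_mono) (use sigma_sq_bounds in \<open>auto intro: mult_right_mono\<close>)

lemma norm_A_sq_ge: "(\<sigma> CARD('n))\<^sup>2 * (y \<bullet> y) \<le> (A *v y) \<bullet> (A *v y)"
  unfolding norm_A_sq_expansion svd_parseval[of y] sum_distrib_left
  by (rule sum_mono) (use sigma_sq_bounds in \<open>auto intro: mult_right_mono\<close>)

lemma sigma_sq_le_Ltil:
  assumes j: "j \<in> {1..CARD('n)}"
  shows "(\<sigma> j)\<^sup>2 \<le> real CARD('m) * Ltil A"
proof -
  have unit: "norm (v j) = 1"
    using orth j by (simp add: norm_eq_1)
  have "(\<sigma> j)\<^sup>2 = (A *v v j) \<bullet> (A *v v j)"
    using sv j unit by (simp add: inner_matrix_vector_mult_transpose norm_eq_1)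
  also have "\<dots> = (\<Sum>c\<in>UNIV. (A $ c \<bullet> v j)\<^sup>2)"
    by (simp add: inner_matrix_vector_mult_rows power2_eq_square)
  also have "\<dots> \<le> (\<Sum>c\<in>(UNIV::'m set). Ltil A)"
    by (intro sum_mono row_inner_sq_le_Ltil unit)
  finally show ?thesis by simp
qed

lemma Ltil_pos: "Ltil A > 0"
proof -
  have "0 < (\<sigma> 1)\<^sup>2"
    using sv_pos[rule_format, of 1] by simp
  also have "\<dots> \<le> real CARD('m) * Ltil A"
    by (rule sigma_sq_le_Ltil) simp
  finally show ?thesis
    by (simp add: zero_less_mult_iff)
qed

lemma noise_var_eq:
  "noise_var A b xs = real CARD('m) * (\<Sum>c\<in>UNIV. (residual $ c)\<^sup>2 * (norm (A $ c))\<^sup>2)"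
  by (simp add: noise_var_def grad_f_def residual_def matrix_vector_mul_component
      power_mult_distrib sum_distrib_left power2_eq_square mult_ac)

lemma condition_number_ge_1: "1 \<le> (\<sigma> 1)\<^sup>2 / (\<sigma> CARD('n))\<^sup>2"
  using sigma_sq_bounds(1)[of 1] sv_pos[rule_format, of "CARD('n)"] by (simp add: le_divide_eq)

lemma sum_row_residual_sq_weighted_le:
  assumes "norm u = 1"
  shows "(\<Sum>c\<in>UNIV. (A $ c \<bullet> x - b $ c)\<^sup>2 * (A $ c \<bullet> u)\<^sup>2)
    \<le> Ltil A * ((\<sigma> 1)\<^sup>2 * (norm (x - xs))\<^sup>2 + 2 * lsF A b xs)"
proof -
  have "(\<Sum>c\<in>UNIV. (A $ c \<bullet> x - b $ c)\<^sup>2 * (A $ c \<bullet> u)\<^sup>2) \<le> (\<Sum>c\<in>UNIV. (A $ c \<bullet> x - b $ c)\<^sup>2) * Ltil A"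
    unfolding sum_distrib_right by (intro sum_mono mult_left_mono row_inner_sq_le_Ltil assms) simp
  also have "\<dots> = Ltil A * ((A *v (x - xs)) \<bullet> (A *v (x - xs)) + 2 * lsF A b xs)"
    by (simp add: sum_row_residual_sq)
  also have "\<dots> \<le> Ltil A * ((\<sigma> 1)\<^sup>2 * (norm (x - xs))\<^sup>2 + 2 * lsF A b xs)"
    using norm_A_sq_le[of "x - xs"] Ltil_pos by (simp add: power2_norm_eq_inner)
  finally show ?thesis .
qed

lemma sum_row_residual_sq_row_norm_le:
  "(\<Sum>c\<in>UNIV. (A $ c \<bullet> x - b $ c)\<^sup>2 * (norm (A $ c))\<^sup>2)
    \<le> 2 * Ltil A * ((A *v (x - xs)) \<bullet> (A *v (x - xs)))
      + 2 * (\<Sum>c\<in>UNIV. (residual $ c)\<^sup>2 * (norm (A $ c))\<^sup>2)"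
proof -
  let ?e = "x - xs"
  have "(A $ c \<bullet> x - b $ c)\<^sup>2 * (norm (A $ c))\<^sup>2
      \<le> 2 * Ltil A * (A $ c \<bullet> ?e)\<^sup>2 + 2 * ((residual $ c)\<^sup>2 * (norm (A $ c))\<^sup>2)" for c
  proof -
    have "(A $ c \<bullet> x - b $ c)\<^sup>2 \<le> 2 * (A $ c \<bullet> ?e)\<^sup>2 + 2 * (residual $ c)\<^sup>2"
      unfolding row_residual by (smt (verit) power2_sum sum_squares_bound)
    hence "(A $ c \<bullet> x - b $ c)\<^sup>2 * (norm (A $ c))\<^sup>2
        \<le> 2 * ((A $ c \<bullet> ?e)\<^sup>2 * (norm (A $ c))\<^sup>2) + 2 * ((residual $ c)\<^sup>2 * (norm (A $ c))\<^sup>2)"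
      by (metis (no_types) distrib_right mult.assoc mult_right_mono zero_le_power2)
    also have "\<dots> \<le> 2 * ((A $ c \<bullet> ?e)\<^sup>2 * Ltil A) + 2 * ((residual $ c)\<^sup>2 * (norm (A $ c))\<^sup>2)"
      using mult_left_mono[OF row_norm_sq_le_Ltil[of A c], of "(A $ c \<bullet> ?e)\<^sup>2"] by simp
    finally show ?thesis
      by (simp add: algebra_simps)
  qed
  hence "(\<Sum>c\<in>UNIV. (A $ c \<bullet> x - b $ c)\<^sup>2 * (norm (A $ c))\<^sup>2)
      \<le> (\<Sum>c\<in>UNIV. 2 * Ltil A * (A $ c \<bullet> ?e)\<^sup>2 + 2 * ((residual $ c)\<^sup>2 * (norm (A $ c))\<^sup>2))"
    by (rule sum_mono)
  also have "\<dots> = 2 * Ltil A * ((A *v ?e) \<bullet> (A *v ?e)) + 2 * (\<Sum>c\<in>UNIV. (residual $ c)\<^sup>2 * (norm (A $ c))\<^sup>2)"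
    by (simp add: inner_matrix_vector_mult_rows sum.distrib sum_distrib_left power2_eq_square)
  finally show ?thesis .
qed

lemma mean_step_proj_sq_le:
  assumes j: "j \<in> {1..CARD('n)}"
  shows "(\<Sum>c\<in>UNIV. ((x - a *\<^sub>R grad_f A b c x - xs) \<bullet> v j)\<^sup>2) / real CARD('m)
    \<le> Afun (\<sigma> j) a * ((x - xs) \<bullet> v j)\<^sup>2
      + Bfun (real CARD('m)) (Ltil A) (\<sigma> 1) (\<sigma> CARD('n)) a * (norm (x - xs))\<^sup>2
      + Cfun (real CARD('m)) (Ltil A) (lsF A b xs) a"
proof -
  define M where "M = real CARD('m)"
  define E where "E = (x - xs) \<bullet> v j"
  define d where "d c = A $ c \<bullet> x - b $ c" for c
  define w where "w c = A $ c \<bullet> v j" for c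
  have M: "M > 0"
    by (simp add: M_def)
  have step_proj: "(x - a *\<^sub>R grad_f A b c x - xs) \<bullet> v j = E - a * M * d c * w c" for c
    by (simp add: grad_f_def E_def d_def w_def M_def inner_diff_left algebra_simps)
  have sum_dw: "(\<Sum>c\<in>UNIV. d c * w c) = (\<sigma> j)\<^sup>2 * E"
    unfolding d_def w_def sum_row_residual_mult
    using sv j by (simp add: inner_matrix_vector_mult_transpose E_def)
  have "(\<Sum>c\<in>UNIV. (E - a * M * d c * w c)\<^sup>2)
      = M * E\<^sup>2 - 2 * E * (a * M * (\<Sum>c\<in>UNIV. d c * w c)) + (a * M)\<^sup>2 * (\<Sum>c\<in>UNIV. (d c)\<^sup>2 * (w c)\<^sup>2)"
    by (simp add: power2_diff sum.distrib sum_subtractf sum_distrib_left power_mult_distrib M_def mult_ac)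
  hence "(\<Sum>c\<in>UNIV. ((x - a *\<^sub>R grad_f A b c x - xs) \<bullet> v j)\<^sup>2) / M
      = E\<^sup>2 - 2 * a * (\<sigma> j)\<^sup>2 * E\<^sup>2 + a\<^sup>2 * M * (\<Sum>c\<in>UNIV. (d c)\<^sup>2 * (w c)\<^sup>2)"
    unfolding step_proj using M by (simp add: sum_dw field_simps power2_eq_square)
  also have "\<dots> \<le> E\<^sup>2 - 2 * a * (\<sigma> j)\<^sup>2 * E\<^sup>2
      + a\<^sup>2 * M * (Ltil A * ((\<sigma> 1)\<^sup>2 * (norm (x - xs))\<^sup>2 + 2 * lsF A b xs))"
    using sum_row_residual_sq_weighted_le[of "v j" x] orth j M
    by (simp add: d_def w_def norm_eq_1 mult_left_mono)
  also have "\<dots> \<le> E\<^sup>2 - 2 * a * (\<sigma> j)\<^sup>2 * E\<^sup>2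
      + a\<^sup>2 * M * Ltil A * (((\<sigma> 1)\<^sup>2 / (\<sigma> CARD('n))\<^sup>2) * (\<sigma> 1)\<^sup>2) * (norm (x - xs))\<^sup>2
      + 2 * a\<^sup>2 * M * Ltil A * lsF A b xs"
  proof -
    have "(\<sigma> 1)\<^sup>2 \<le> ((\<sigma> 1)\<^sup>2 / (\<sigma> CARD('n))\<^sup>2) * (\<sigma> 1)\<^sup>2"
      using mult_right_mono[OF condition_number_ge_1 zero_le_power2[of "\<sigma> 1"]] by simp
    hence "a\<^sup>2 * M * Ltil A * (\<sigma> 1)\<^sup>2 * (norm (x - xs))\<^sup>2
        \<le> a\<^sup>2 * M * Ltil A * (((\<sigma> 1)\<^sup>2 / (\<sigma> CARD('n))\<^sup>2) * (\<sigma> 1)\<^sup>2) * (norm (x - xs))\<^sup>2"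
      using M Ltil_pos by (intro mult_right_mono mult_left_mono) auto
    thus ?thesis
      by (simp add: algebra_simps)
  qed
  also have "\<dots> = Afun (\<sigma> j) a * E\<^sup>2 + Bfun M (Ltil A) (\<sigma> 1) (\<sigma> CARD('n)) a * (norm (x - xs))\<^sup>2
      + Cfun M (Ltil A) (lsF A b xs) a"
    by (simp add: Afun_def Bfun_def Cfun_def algebra_simps)
  finally show ?thesis
    by (simp add: M_def E_def)
qed

lemma mean_step_norm_sq_le:
  assumes a: "0 \<le> a" "a \<le> 1 / (2 * real CARD('m) * Ltil A)"
  shows "(\<Sum>c\<in>UNIV. (norm (x - a *\<^sub>R grad_f A b c x - xs))\<^sup>2) / real CARD('m)
    \<le> pfun (\<sigma> CARD('n)) a * (norm (x - xs))\<^sup>2 + qfun (noise_var A b xs) a"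
proof -
  define M where "M = real CARD('m)"
  define e where "e = x - xs"
  define d where "d c = A $ c \<bullet> x - b $ c" for c
  define Ae where "Ae = (A *v e) \<bullet> (A *v e)"
  define R where "R = (\<Sum>c\<in>UNIV. (residual $ c)\<^sup>2 * (norm (A $ c))\<^sup>2)"
  have M: "M > 0"
    by (simp add: M_def)
  have Ae: "Ae \<ge> 0"
    by (simp add: Ae_def)
  have aML: "a * M * Ltil A \<le> 1/2"
    using a Ltil_pos by (simp add: M_def field_simps)
  have step_norm: "(norm (x - a *\<^sub>R grad_f A b c x - xs))\<^sup>2
      = e \<bullet> e - 2 * a * M * d c * (A $ c \<bullet> e) + (a * M)\<^sup>2 * (d c)\<^sup>2 * (norm (A $ c))\<^sup>2" for c
  proof -
    have eq: "x - a *\<^sub>R grad_f A b c x - xs = e - (a * M * d c) *\<^sub>R A $ c"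
      by (simp add: grad_f_def e_def d_def M_def algebra_simps)
    show ?thesis
      unfolding eq power2_norm_eq_inner
      by (simp add: inner_diff_left inner_diff_right inner_commute power2_eq_square algebra_simps)
  qed
  have "(\<Sum>c\<in>UNIV. (norm (x - a *\<^sub>R grad_f A b c x - xs))\<^sup>2)
      = M * (e \<bullet> e) - 2 * a * M * Ae + (a * M)\<^sup>2 * (\<Sum>c\<in>UNIV. (d c)\<^sup>2 * (norm (A $ c))\<^sup>2)"
    unfolding step_norm Ae_def e_def d_def sum_row_residual_mult[symmetric]
    by (simp add: sum.distrib sum_subtractf sum_distrib_left M_def algebra_simps)
  hence "(\<Sum>c\<in>UNIV. (norm (x - a *\<^sub>R grad_f A b c x - xs))\<^sup>2) / M
      = e \<bullet> e - 2 * a * Ae + a\<^sup>2 * M * (\<Sum>c\<in>UNIV. (d c)\<^sup>2 * (norm (A $ c))\<^sup>2)"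
    using M by (simp add: field_simps power2_eq_square)
  also have "\<dots> \<le> e \<bullet> e - 2 * a * Ae + a\<^sup>2 * M * (2 * Ltil A * Ae + 2 * R)"
    using sum_row_residual_sq_row_norm_le[of x] M
    by (simp add: d_def Ae_def e_def R_def mult_left_mono)
  also have "\<dots> = e \<bullet> e - 2 * a * (1 - a * M * Ltil A) * Ae + 2 * a\<^sup>2 * (M * R)"
    by (simp add: algebra_simps power2_eq_square)
  also have "\<dots> \<le> e \<bullet> e - a * Ae + 2 * a\<^sup>2 * (M * R)"
    using mult_right_mono[OF mult_left_mono[of "1/2" "1 - a * M * Ltil A" "2 * a"] Ae] aML a
    by simp
  also have "\<dots> \<le> e \<bullet> e - a * ((\<sigma> CARD('n))\<^sup>2 * (e \<bullet> e)) + 2 * a\<^sup>2 * (M * R)"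
    using norm_A_sq_ge[of e] a by (simp add: Ae_def mult_left_mono)
  also have "\<dots> = pfun (\<sigma> CARD('n)) a * (norm e)\<^sup>2 + qfun (noise_var A b xs) a"
    by (simp add: pfun_def qfun_def noise_var_eq R_def M_def power2_norm_eq_inner algebra_simps)
  finally show ?thesis
    by (simp add: M_def e_def)
qed

lemma Afun_pfun_nonneg:
  assumes "j \<in> {1..CARD('n)}" "0 \<le> a" "a \<le> 1 / (2 * real CARD('m) * Ltil A)"
  shows "0 \<le> Afun (\<sigma> j) a" "0 \<le> pfun (\<sigma> j) a"
proof -
  have "a * (\<sigma> j)\<^sup>2 \<le> a * (real CARD('m) * Ltil A)"
    using sigma_sq_le_Ltil assms by (intro mult_left_mono) auto
  also have "\<dots> \<le> 1/2"
    using assms Ltil_pos by (simp add: field_simps)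
  finally have "a * (\<sigma> j)\<^sup>2 \<le> 1/2" .
  moreover have "0 \<le> a * (\<sigma> j)\<^sup>2"
    using assms by simp
  ultimately show "0 \<le> Afun (\<sigma> j) a" "0 \<le> pfun (\<sigma> j) a"
    by (simp_all add: Afun_def pfun_def)
qed

context
  fixes \<alpha> :: "nat \<Rightarrow> real" and l :: nat
  assumes step_size: "\<forall>k. 0 < \<alpha> k \<and> \<alpha> k \<le> 1 / (2 * real CARD('m) * Ltil A)"
    and l: "l \<in> {1..CARD('n)}"
begin

lemma Acoef_nonneg: "0 \<le> Acoef (\<sigma> l) \<alpha> n k"
  unfolding Acoef_def using step_size
  by (intro prod_nonneg Afun_pfun_nonneg(1)[OF l]) (auto intro: less_imp_le)

lemma Bcoef_nonneg: "0 \<le> Bcoef (\<sigma> l) (real CARD('m)) (Ltil A) (\<sigma> 1) (\<sigma> CARD('n)) \<alpha> n k"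
proof -
  have "0 \<le> pfun (\<sigma> CARD('n)) (\<alpha> i)" for i
    using step_size by (intro Afun_pfun_nonneg(2)) (auto intro: less_imp_le)
  moreover have "0 \<le> Bfun (real CARD('m)) (Ltil A) (\<sigma> 1) (\<sigma> CARD('n)) (\<alpha> i)" for i
    using Ltil_pos by (simp add: Bfun_def)
  ultimately show ?thesis
    unfolding Bcoef_def
    by (intro sum_nonneg mult_nonneg_nonneg prod_nonneg Acoef_nonneg[unfolded Acoef_def]) auto
qed

lemma mean_after_proj_sq_le:
  assumes "k \<le> n"
  shows "mean_after (\<lambda>x. ((x - xs) \<bullet> v l)\<^sup>2) (sgd_step A b \<alpha>) k (Suc n - k) x
    \<le> Acoef (\<sigma> l) \<alpha> n k * ((x - xs) \<bullet> v l)\<^sup>2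
      + Bcoef (\<sigma> l) (real CARD('m)) (Ltil A) (\<sigma> 1) (\<sigma> CARD('n)) \<alpha> n k * (norm (x - xs))\<^sup>2
      + Ccoef (\<sigma> l) (real CARD('m)) (Ltil A) (\<sigma> 1) (\<sigma> CARD('n)) (lsF A b xs) (noise_var A b xs) \<alpha> n k"
  using assms
proof (induction k arbitrary: x rule: inc_induct)
  case base
  show ?case
    using mean_step_proj_sq_le[OF l, of x "\<alpha> n"]
    by (simp add: sgd_step_def Acoef_def Bcoef_def Ccoef_def)
next
  case (step k)
  let ?M = "real CARD('m)"
  let ?A = "Acoef (\<sigma> l) \<alpha> n (Suc k)"
  let ?B = "Bcoef (\<sigma> l) ?M (Ltil A) (\<sigma> 1) (\<sigma> CARD('n)) \<alpha> n (Suc k)"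
  let ?C = "Ccoef (\<sigma> l) ?M (Ltil A) (\<sigma> 1) (\<sigma> CARD('n)) (lsF A b xs) (noise_var A b xs) \<alpha> n (Suc k)"
  let ?y = "\<lambda>c. sgd_step A b \<alpha> k c x"
  have "Suc n - k = Suc (Suc n - Suc k)"
    using step.hyps by simp
  hence "mean_after (\<lambda>x. ((x - xs) \<bullet> v l)\<^sup>2) (sgd_step A b \<alpha>) k (Suc n - k) x
      \<le> (\<Sum>c\<in>UNIV. ?A * ((?y c - xs) \<bullet> v l)\<^sup>2 + ?B * (norm (?y c - xs))\<^sup>2 + ?C) / ?M"
    by (simp only: mean_after.simps(2)) (intro divide_right_mono sum_mono step.IH; simp)
  also have "\<dots> = ?A * ((\<Sum>c\<in>UNIV. ((?y c - xs) \<bullet> v l)\<^sup>2) / ?M)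
      + ?B * ((\<Sum>c\<in>UNIV. (norm (?y c - xs))\<^sup>2) / ?M) + ?C"
    by (simp add: sum.distrib add_divide_distrib flip: sum_distrib_left)
  also have "\<dots> \<le> ?A * (Afun (\<sigma> l) (\<alpha> k) * ((x - xs) \<bullet> v l)\<^sup>2
        + Bfun ?M (Ltil A) (\<sigma> 1) (\<sigma> CARD('n)) (\<alpha> k) * (norm (x - xs))\<^sup>2 + Cfun ?M (Ltil A) (lsF A b xs) (\<alpha> k))
      + ?B * (pfun (\<sigma> CARD('n)) (\<alpha> k) * (norm (x - xs))\<^sup>2 + qfun (noise_var A b xs) (\<alpha> k)) + ?C"
    unfolding sgd_step_def using step_size
    by (intro add_mono mult_left_mono mean_step_proj_sq_le[OF l] mean_step_norm_sq_le
        Acoef_nonneg Bcoef_nonneg order.refl) (auto intro: less_imp_le)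
  also have "\<dots> = Acoef (\<sigma> l) \<alpha> n k * ((x - xs) \<bullet> v l)\<^sup>2
      + Bcoef (\<sigma> l) ?M (Ltil A) (\<sigma> 1) (\<sigma> CARD('n)) \<alpha> n k * (norm (x - xs))\<^sup>2
      + Ccoef (\<sigma> l) ?M (Ltil A) (\<sigma> 1) (\<sigma> CARD('n)) (lsF A b xs) (noise_var A b xs) \<alpha> n k"
    using step.hyps by (simp add: Acoef_Suc Bcoef_Suc Ccoef_Suc algebra_simps)
  finally show ?case .
qed

end

end

abbreviation uniform_idx :: "nat \<Rightarrow> 'm::finite measure" where
  "uniform_idx \<equiv> \<lambda>_. measure_pmf (pmf_of_set UNIV)"

lemma product_prob_space_uniform_idx: "product_prob_space (uniform_idx :: nat \<Rightarrow> 'm::finite measure)"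
  by (rule product_prob_spaceI) (auto intro: measure_pmf.prob_space_axioms)

lemma idx_space_eq: "idx_space = PiM UNIV uniform_idx"
  by (simp add: idx_space_def)

lemma prob_space_idx_space: "prob_space (idx_space :: (nat \<Rightarrow> 'm::finite) measure)"
proof -
  interpret product_prob_space "uniform_idx :: nat \<Rightarrow> 'm measure" UNIV
    by (rule product_prob_space_uniform_idx)
  show ?thesis
    unfolding idx_space_eq by (rule P.prob_space_axioms)
qed

lemma sgd_eq_if_prefix_eq:
  "(\<And>i. i < k \<Longrightarrow> \<omega> i = \<omega>' i) \<Longrightarrow> sgd A b x0 \<alpha> k \<omega> = sgd A b x0 \<alpha> k \<omega>'"
  by (induction k) auto

lemma sgd_restrict: "k \<le> N \<Longrightarrow> sgd A b x0 \<alpha> k (restrict \<omega> {..<N}) = sgd A b x0 \<alpha> k \<omega>"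
  by (rule sgd_eq_if_prefix_eq) auto

lemma sgd_step_measurable: "sgd_step A b \<alpha> t c \<in> borel_measurable borel"
  unfolding sgd_step_def grad_f_def
  by (intro borel_measurable_continuous_onI continuous_intros)

lemma sgd_measurable:
  "{..<k} \<subseteq> I \<Longrightarrow> sgd A b x0 \<alpha> k \<in> borel_measurable (PiM I (uniform_idx :: nat \<Rightarrow> 'm::finite measure))"
proof (induction k)
  case 0
  thus ?case by simp
next
  case (Suc k)
  have "{..<k} \<subseteq> I" and k: "k \<in> I"
    using Suc.prems by (auto simp: subset_eq)
  with Suc.IH have IH: "sgd A b x0 \<alpha> k \<in> borel_measurable (PiM I uniform_idx)"
    by blast
  have "(\<lambda>\<omega>. \<omega> k) \<in> measurable (PiM I (uniform_idx :: nat \<Rightarrow> 'm measure)) (count_space UNIV)"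
    using measurable_component_singleton[OF k, of uniform_idx] by (simp add: measurable_cong_sets)
  hence "(\<lambda>\<omega>. sgd_step A b \<alpha> k (\<omega> k) (sgd A b x0 \<alpha> k \<omega>)) \<in> borel_measurable (PiM I uniform_idx)"
    by (rule measurable_compose_countable[rotated])
       (rule measurable_compose[OF IH sgd_step_measurable])
  thus ?case
    by (simp only: sgd_Suc_step)
qed

lemma finitely_dependent_integral:
  fixes g :: "(nat \<Rightarrow> 'm::finite) \<Rightarrow> real"
  assumes J: "finite J"
    and g: "g \<in> borel_measurable (PiM J uniform_idx)"
    and g_restrict: "\<And>\<omega>. g (restrict \<omega> J) = g \<omega>"
  shows "integrable (PiM J uniform_idx) g" "integrable idx_space g"
    "integral\<^sup>L idx_space g = integral\<^sup>L (PiM J uniform_idx) g"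
proof -
  interpret PS: product_prob_space "uniform_idx :: nat \<Rightarrow> 'm measure" UNIV
    by (rule product_prob_space_uniform_idx)
  have distr_restrict: "distr (PiM UNIV uniform_idx) (PiM J uniform_idx) (\<lambda>x. restrict x J)
      = PiM J (uniform_idx :: nat \<Rightarrow> 'm measure)"
    using J by (intro PS.distr_PiM_restrict_finite) auto
  have restrict: "(\<lambda>x. restrict x J) \<in> measurable (PiM UNIV (uniform_idx :: nat \<Rightarrow> 'm measure)) (PiM J uniform_idx)"
    by (rule measurable_restrict_subset) simp
  have "g \<in> borel_measurable (PiM UNIV uniform_idx)"
    using measurable_comp[OF restrict g] g_restrict by (simp add: comp_def)
  moreover have "\<bar>g \<omega>\<bar> \<le> (\<Sum>x\<in>PiE J (\<lambda>_. UNIV). \<bar>g x\<bar>)" for \<omega>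
    using member_le_sum[of "restrict \<omega> J" "PiE J (\<lambda>_. UNIV :: 'm set)" "\<lambda>x. \<bar>g x\<bar>"] J g_restrict
    by (simp add: finite_PiE)
  ultimately have int: "integrable (PiM UNIV uniform_idx) g"
    by (intro PS.integrable_const_bound[where B = "\<Sum>x\<in>PiE J (\<lambda>_. UNIV). \<bar>g x\<bar>"]) auto
  thus "integrable idx_space g"
    by (simp add: idx_space_eq)
  from int have "integrable (distr (PiM UNIV uniform_idx) (PiM J uniform_idx) (\<lambda>x. restrict x J)) g"
    using g_restrict by (simp add: integrable_distr_eq[OF restrict g])
  thus "integrable (PiM J uniform_idx) g"
    by (simp only: distr_restrict)
  have "integral\<^sup>L (PiM J uniform_idx) g = integral\<^sup>L (PiM UNIV uniform_idx) (\<lambda>x. g (restrict x J))"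
    by (subst distr_restrict[symmetric]) (rule integral_distr[OF restrict g])
  thus "integral\<^sup>L idx_space g = integral\<^sup>L (PiM J uniform_idx) g"
    using g_restrict by (simp add: idx_space_eq)
qed

text \<open>Integrating out \<open>i\<^sub>j\<close> first: \<open>x\<^sub>k\<close> and \<open>x\<^sub>j\<close> depend only on \<open>i\<^sub>0, \<dots>, i\<^sub>j\<^sub>-\<^sub>1\<close>.\<close>

lemma integrable_sgd_comp:
  fixes A :: "real^'n^'m::finite" and f :: "real^'n \<Rightarrow> real"
  assumes "f \<in> borel_measurable borel"
  shows "integrable idx_space (\<lambda>\<omega>. f (sgd A b x0 \<alpha> k \<omega>))"
proof -
  have "(\<lambda>\<omega>. f (sgd A b x0 \<alpha> k \<omega>)) \<in> borel_measurable (PiM {..<k} uniform_idx)"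
    by (intro measurable_compose[OF sgd_measurable assms]) simp
  from finitely_dependent_integral(2)[OF _ this] show ?thesis
    by (simp add: sgd_restrict)
qed

lemma integral_indicator_sgd_Suc:
  fixes A :: "real^'n^'m::finite" and B :: "(real^'n) set" and f :: "real^'n \<Rightarrow> real"
  assumes B: "B \<in> sets borel" and f: "f \<in> borel_measurable borel" and kj: "k \<le> j"
  shows "(\<integral>\<omega>. indicator B (sgd A b x0 \<alpha> k \<omega>) * f (sgd A b x0 \<alpha> (Suc j) \<omega>) \<partial>idx_space)
    = (\<integral>\<omega>. indicator B (sgd A b x0 \<alpha> k \<omega>)
          * ((\<Sum>c\<in>UNIV. f (sgd_step A b \<alpha> j c (sgd A b x0 \<alpha> j \<omega>))) / real CARD('m)) \<partial>idx_space)"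
proof -
  interpret PS: product_prob_space "uniform_idx :: nat \<Rightarrow> 'm measure" UNIV
    by (rule product_prob_space_uniform_idx)
  define H where "H \<omega> = indicator B (sgd A b x0 \<alpha> k \<omega>) * f (sgd A b x0 \<alpha> (Suc j) \<omega>)" for \<omega>
  define K where "K \<omega> = indicator B (sgd A b x0 \<alpha> k \<omega>)
      * ((\<Sum>c\<in>UNIV. f (sgd_step A b \<alpha> j c (sgd A b x0 \<alpha> j \<omega>))) / real CARD('m))" for \<omega>
  have sgd_k: "sgd A b x0 \<alpha> k \<in> borel_measurable (PiM {..<j} (uniform_idx :: nat \<Rightarrow> 'm measure))"
    using kj by (intro sgd_measurable) auto
  have H: "H \<in> borel_measurable (PiM {..<Suc j} (uniform_idx :: nat \<Rightarrow> 'm measure))"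
    unfolding H_def using kj B f
    by (intro borel_measurable_times measurable_compose[OF sgd_measurable]) auto
  have K: "K \<in> borel_measurable (PiM {..<j} (uniform_idx :: nat \<Rightarrow> 'm measure))"
    unfolding K_def using B
    by (intro borel_measurable_times borel_measurable_divide borel_measurable_sum
        measurable_compose[OF sgd_k] measurable_compose[OF sgd_measurable]
        measurable_compose[OF sgd_step_measurable f]) auto
  have H_restrict: "H (restrict \<omega> {..<Suc j}) = H \<omega>" for \<omega>
    unfolding H_def using kj by (simp add: sgd_restrict)
  have K_restrict: "K (restrict \<omega> {..<j}) = K \<omega>" for \<omega>
    unfolding K_def using kj by (simp add: sgd_restrict)
  have "integral\<^sup>L idx_space H = integral\<^sup>L (PiM (insert j {..<j}) uniform_idx) H"
    using finitely_dependent_integral(3)[OF _ H H_restrict] by (simp add: lessThan_Suc)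
  also have "\<dots> = (\<integral>x. (\<integral>y. H (x(j := y)) \<partial>uniform_idx j) \<partial>PiM {..<j} uniform_idx)"
    using finitely_dependent_integral(1)[OF _ H H_restrict]
    by (intro PS.product_integral_insert) (auto simp: lessThan_Suc)
  also have "\<dots> = integral\<^sup>L (PiM {..<j} uniform_idx) K"
  proof (rule Bochner_Integration.integral_cong[OF refl])
    fix x :: "nat \<Rightarrow> 'm"
    have "sgd A b x0 \<alpha> k (x(j := y)) = sgd A b x0 \<alpha> k x" "sgd A b x0 \<alpha> j (x(j := y)) = sgd A b x0 \<alpha> j x"
      for y using kj by (auto intro: sgd_eq_if_prefix_eq)
    thus "(\<integral>y. H (x(j := y)) \<partial>uniform_idx j) = K x"
      unfolding H_def K_def by (simp add: integral_pmf_of_set sgd_step_def sum_distrib_left)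
  qed
  also have "\<dots> = integral\<^sup>L idx_space K"
    using finitely_dependent_integral(3)[OF _ K K_restrict] by simp
  finally show ?thesis
    unfolding H_def K_def .
qed

lemma mean_after_measurable:
  fixes T :: "nat \<Rightarrow> 'm::finite \<Rightarrow> 'a::topological_space \<Rightarrow> 'a"
  assumes "\<phi> \<in> borel_measurable borel" "\<And>t c. T t c \<in> borel_measurable borel"
  shows "mean_after \<phi> T t d \<in> borel_measurable borel"
  using assms(1)
proof (induction d arbitrary: t)
  case 0
  thus ?case by (simp add: fun_eq_iff[symmetric])
next
  case (Suc d)
  have "(\<lambda>x. mean_after \<phi> T (Suc t) d (T t c x)) \<in> borel_measurable borel" for c
    using measurable_compose[OF assms(2) Suc.IH[OF Suc.prems]] .
  hence "(\<lambda>x. (\<Sum>c\<in>UNIV. mean_after \<phi> T (Suc t) d (T t c x)) / real CARD('m)) \<in> borel_measurable borel"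
    by (intro borel_measurable_divide borel_measurable_sum) auto
  thus ?case by simp
qed

lemma integral_indicator_sgd_mean_after:
  fixes A :: "real^'n^'m::finite" and \<phi> :: "real^'n \<Rightarrow> real"
  assumes B: "B \<in> sets borel" and \<phi>: "\<phi> \<in> borel_measurable borel" and kj: "k \<le> j"
  shows "(\<integral>\<omega>. indicator B (sgd A b x0 \<alpha> k \<omega>) * \<phi> (sgd A b x0 \<alpha> (j + d) \<omega>) \<partial>idx_space)
    = (\<integral>\<omega>. indicator B (sgd A b x0 \<alpha> k \<omega>) * mean_after \<phi> (sgd_step A b \<alpha>) j d (sgd A b x0 \<alpha> j \<omega>) \<partial>idx_space)"
  using kj
proof (induction d arbitrary: j)
  case 0
  thus ?case by simp
next
  case (Suc d)
  have "(\<integral>\<omega>. indicator B (sgd A b x0 \<alpha> k \<omega>) * \<phi> (sgd A b x0 \<alpha> (j + Suc d) \<omega>) \<partial>idx_space)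
      = (\<integral>\<omega>. indicator B (sgd A b x0 \<alpha> k \<omega>)
          * mean_after \<phi> (sgd_step A b \<alpha>) (Suc j) d (sgd A b x0 \<alpha> (Suc j) \<omega>) \<partial>idx_space)"
    using Suc.IH[of "Suc j"] Suc.prems by simp
  also have "\<dots> = (\<integral>\<omega>. indicator B (sgd A b x0 \<alpha> k \<omega>)
      * mean_after \<phi> (sgd_step A b \<alpha>) j (Suc d) (sgd A b x0 \<alpha> j \<omega>) \<partial>idx_space)"
    by (subst integral_indicator_sgd_Suc[OF B mean_after_measurable[OF \<phi> sgd_step_measurable] Suc.prems])
       simp
  finally show ?case .
qed

lemma real_cond_exp_sgd:
  fixes A :: "real^'n^'m::finite" and \<phi> :: "real^'n \<Rightarrow> real"
  assumes \<phi>: "\<phi> \<in> borel_measurable borel"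
  shows "AE \<omega> in idx_space.
    real_cond_exp idx_space (vimage_algebra (space idx_space) (sgd A b x0 \<alpha> k) borel)
      (\<lambda>\<omega>. \<phi> (sgd A b x0 \<alpha> (k + d) \<omega>)) \<omega>
    = mean_after \<phi> (sgd_step A b \<alpha>) k d (sgd A b x0 \<alpha> k \<omega>)"
proof -
  let ?S = "vimage_algebra (space idx_space) (sgd A b x0 \<alpha> k) borel"
  let ?g = "mean_after \<phi> (sgd_step A b \<alpha>) k d"
  interpret prob_space "idx_space :: (nat \<Rightarrow> 'm) measure"
    by (rule prob_space_idx_space)
  have g: "?g \<in> borel_measurable borel"
    by (rule mean_after_measurable[OF \<phi> sgd_step_measurable])
  have "subalgebra idx_space ?S"
    using measurable_sets[OF sgd_measurable[of k UNIV], folded idx_space_eq]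
    by (auto simp: subalgebra_def sets_vimage_algebra2)
  then interpret finite_measure_subalgebra idx_space ?S
    by unfold_locales
  show ?thesis
  proof (rule real_cond_exp_charact)
    fix X assume "X \<in> sets ?S"
    then obtain B where B: "B \<in> sets borel" and X: "X = sgd A b x0 \<alpha> k -` B \<inter> space idx_space"
      by (auto simp: sets_vimage_algebra2)
    have "(\<integral>\<omega>\<in>X. \<phi> (sgd A b x0 \<alpha> (k + d) \<omega>) \<partial>idx_space)
        = (\<integral>\<omega>. indicator B (sgd A b x0 \<alpha> k \<omega>) * \<phi> (sgd A b x0 \<alpha> (k + d) \<omega>) \<partial>idx_space)"
      unfolding set_lebesgue_integral_def X
      by (intro Bochner_Integration.integral_cong) (auto split: split_indicator)
    also have "\<dots> = (\<integral>\<omega>. indicator B (sgd A b x0 \<alpha> k \<omega>) * ?g (sgd A b x0 \<alpha> k \<omega>) \<partial>idx_space)"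
      by (rule integral_indicator_sgd_mean_after[OF B \<phi> order.refl])
    also have "\<dots> = (\<integral>\<omega>\<in>X. ?g (sgd A b x0 \<alpha> k \<omega>) \<partial>idx_space)"
      unfolding set_lebesgue_integral_def X
      by (intro Bochner_Integration.integral_cong) (auto split: split_indicator)
    finally show "(\<integral>\<omega>\<in>X. \<phi> (sgd A b x0 \<alpha> (k + d) \<omega>) \<partial>idx_space)
        = (\<integral>\<omega>\<in>X. ?g (sgd A b x0 \<alpha> k \<omega>) \<partial>idx_space)" .
  next
    show "integrable idx_space (\<lambda>\<omega>. \<phi> (sgd A b x0 \<alpha> (k + d) \<omega>))"
      by (rule integrable_sgd_comp[OF \<phi>])
  next
    show "integrable idx_space (\<lambda>\<omega>. ?g (sgd A b x0 \<alpha> k \<omega>))"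
      by (rule integrable_sgd_comp[OF g])
  next
    show "(\<lambda>\<omega>. ?g (sgd A b x0 \<alpha> k \<omega>)) \<in> borel_measurable ?S"
      by (rule measurable_compose[OF measurable_vimage_algebra1 g]) simp
  qed
qed

lemma integral_sgd_eq_mean_after:
  fixes A :: "real^'n^'m::finite" and \<phi> :: "real^'n \<Rightarrow> real"
  assumes "\<phi> \<in> borel_measurable borel"
  shows "(\<integral>\<omega>. \<phi> (sgd A b x0 \<alpha> d \<omega>) \<partial>idx_space) = mean_after \<phi> (sgd_step A b \<alpha>) 0 d x0"
proof -
  interpret prob_space "idx_space :: (nat \<Rightarrow> 'm) measure"
    by (rule prob_space_idx_space)
  show ?thesis
    using integral_indicator_sgd_mean_after[OF sets.top assms order.refl, of A b x0 \<alpha> 0 d]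
    by (simp add: prob_space)
qed

theorem lemma11:
  fixes A :: "real^'n^'m" and b :: "real^'m" and xs x0 :: "real^'n"
    and \<sigma> :: "nat \<Rightarrow> real" and v :: "nat \<Rightarrow> real^'n"
    and \<alpha> :: "nat \<Rightarrow> real" and l n :: nat
  assumes MN: "CARD('m) \<ge> CARD('n)"
    and rk: "rank A = CARD('n)"
    and xs_min: "\<forall>y. lsF A b xs \<le> lsF A b y"
    and orth: "\<forall>i\<in>{1..CARD('n)}. \<forall>j\<in>{1..CARD('n)}. v i \<bullet> v j = (if i = j then 1 else 0)"
    and sv: "\<forall>j\<in>{1..CARD('n)}. transpose A *v (A *v v j) = (\<sigma> j)^2 *\<^sub>R v j"
    and sv_pos: "\<forall>j\<in>{1..CARD('n)}. \<sigma> j > 0"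
    and sv_ord: "\<forall>i\<in>{1..CARD('n)}. \<forall>j\<in>{1..CARD('n)}. i \<le> j \<longrightarrow> \<sigma> j \<le> \<sigma> i"
    and step: "\<forall>k. 0 < \<alpha> k \<and> \<alpha> k \<le> 1 / (2 * real CARD('m) * Ltil A)"
    and l: "1 \<le> l" "l \<le> CARD('n)"
  shows "(\<forall>k\<le>n. AE \<omega> in idx_space.
            real_cond_exp idx_space (vimage_algebra (space idx_space) (sgd A b x0 \<alpha> k) borel)
              (\<lambda>\<omega>. ((sgd A b x0 \<alpha> (Suc n) \<omega> - xs) \<bullet> v l)^2) \<omega>
            \<le> Acoef (\<sigma> l) \<alpha> n k * ((sgd A b x0 \<alpha> k \<omega> - xs) \<bullet> v l)^2
              + Bcoef (\<sigma> l) (real CARD('m)) (Ltil A) (\<sigma> 1) (\<sigma> CARD('n)) \<alpha> n k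
                  * (norm (sgd A b x0 \<alpha> k \<omega> - xs))^2
              + Ccoef (\<sigma> l) (real CARD('m)) (Ltil A) (\<sigma> 1) (\<sigma> CARD('n)) (lsF A b xs)
                  (noise_var A b xs) \<alpha> n k)
       \<and> (\<integral>\<omega>. ((sgd A b x0 \<alpha> (Suc n) \<omega> - xs) \<bullet> v l)^2 \<partial>idx_space)
            \<le> Acoef (\<sigma> l) \<alpha> n 0 * ((x0 - xs) \<bullet> v l)^2
              + Bcoef (\<sigma> l) (real CARD('m)) (Ltil A) (\<sigma> 1) (\<sigma> CARD('n)) \<alpha> n 0 * (norm (x0 - xs))^2
              + Ccoef (\<sigma> l) (real CARD('m)) (Ltil A) (\<sigma> 1) (\<sigma> CARD('n)) (lsF A b xs)
                  (noise_var A b xs) \<alpha> n 0"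
proof -
  interpret lsq_svd A b xs \<sigma> v
    using xs_min orth sv sv_pos sv_ord by unfold_locales
  have l': "l \<in> {1..CARD('n)}"
    using l by simp
  define \<phi> where "\<phi> = (\<lambda>x :: real^'n. ((x - xs) \<bullet> v l)\<^sup>2)"
  have \<phi>: "\<phi> \<in> borel_measurable borel"
    unfolding \<phi>_def by (intro borel_measurable_continuous_onI continuous_intros)
  have cond: "AE \<omega> in idx_space.
      real_cond_exp idx_space (vimage_algebra (space idx_space) (sgd A b x0 \<alpha> k) borel)
        (\<lambda>\<omega>. \<phi> (sgd A b x0 \<alpha> (Suc n) \<omega>)) \<omega>
      = mean_after \<phi> (sgd_step A b \<alpha>) k (Suc n - k) (sgd A b x0 \<alpha> k \<omega>)" if "k \<le> n" for k
    using real_cond_exp_sgd[OF \<phi>, of A b x0 \<alpha> k "Suc n - k"] that by simp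
  have integral: "(\<integral>\<omega>. \<phi> (sgd A b x0 \<alpha> (Suc n) \<omega>) \<partial>idx_space) = mean_after \<phi> (sgd_step A b \<alpha>) 0 (Suc n) x0"
    by (rule integral_sgd_eq_mean_after[OF \<phi>])
  note bound = mean_after_proj_sq_le[OF step l']
  show ?thesis
    by (intro conjI allI impI eventually_mono[OF cond])
       (auto simp only: integral[unfolded \<phi>_def] \<phi>_def intro: bound bound[of 0, unfolded diff_zero])
qed

end
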